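(* Let $\alpha=(\alpha_1,\dots,\alpha_t)\in\mathcal{P}(n)$ with $\delta(\alpha)=\big(1,2,\dots,q-1,q,q^{(s_q)},(q-1)^{(s_{q-1})},\dots,1^{(s_1)}\big)$, where $q\ge1$ and $s_1,\dots,s_q\ge0$. Then \[\alpha_1\in A_1=\Big\{q,\ q+s_q,\ q+s_q+s_{q-1},\ \dots,\ q+\sum_{i=1}^q s_i\Big\}.\] Equivalently, $\alpha\in\mathcal{P}(n,k)^*$ for some $k\in A_1$.
   Context: A partition of a positive integer $n$ is a finite non-increasing sequence $\alpha=(\alpha_1,\dots,\alpha_t)$ of positive integers with sum $n$; $\mathcal{P}(n)$ is the set of partitions of $n$, and $\alpha_i=0$ for $i>t$. The diagonal sequence is $\delta(\alpha)=(d_k)_{k\ge1}$ with $d_k=|\{i:1\le i\le k,\ \alpha_i+i-1\ge k\}|$, trailing zeros omitted; $j^{(s)}$ denotes $s$ consecutive entries equal to $j$. $\mathcal{P}(n,k)^*$ denotes the set of partitions of $n$ whose largest part equals $k$. *)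

theory Defs
  imports Main
begin

definition partitions :: "nat \<Rightarrow> nat list set" where
  "partitions n = {xs. sorted_wrt (\<ge>) xs \<and> (\<forall>x\<in>set xs. 0 < x) \<and> sum_list xs = n}"

text \<open>1-indexed parts, with alpha_i = 0 for i > t.\<close>
definition part :: "nat list \<Rightarrow> nat \<Rightarrow> nat" where
  "part xs i = (if 1 \<le> i \<and> i \<le> length xs then xs ! (i - 1) else 0)"

definition diag_entry :: "nat list \<Rightarrow> nat \<Rightarrow> nat" where
  "diag_entry xs k = card {i. 1 \<le> i \<and> i \<le> k \<and> part xs i + i - 1 \<ge> k}"

text \<open>Diagonal sequence (d_1, d_2, ...) with trailing zeros omitted; d_k = 0 for
  k > sum_list xs + length xs, so truncating there loses nothing.\<close>
definition diag_seq :: "nat list \<Rightarrow> nat list" where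
  "diag_seq xs = rev (dropWhile (\<lambda>x. x = 0)
      (rev (map (diag_entry xs) [1..<sum_list xs + length xs + 1])))"

end

theory Submission
  imports Defs
begin

(*
  Write k for the largest part and d_j for the diagonal entries. Every d_j is at most k,
  and d_k >= 1. The prescribed sequence starts 1, ..., q, so d_q = q and q <= k.
  If q < k, then d_k <= q < k. Shifting indices down by one embeds the index set of
  d_(k+1) into that of d_k, and this embedding is onto only when d_k = k; hence
  d_(k+1) < d_k. So k is the last position of one of the constant runs
  q^(s_q), ..., 1^(s_1), i.e. k = q + s_q + ... + s_j.
*)

lemma part_antimono:
  assumes "sorted_wrt (\<ge>) xs" "1 \<le> i" "i \<le> j"
  shows "part xs j \<le> part xs i"
proof (cases "i < j \<and> j \<le> length xs")
  case True
  then have "i - 1 < j - 1" "j - 1 < length xs"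
    using assms(2) by auto
  then show ?thesis
    using True assms(2) sorted_wrt_nth_less[OF assms(1)] by (simp add: part_def)
qed (use assms in \<open>auto simp: part_def\<close>)

lemma part_le_sum_list: "part xs i \<le> sum_list xs"
  by (auto simp: part_def intro: elem_le_sum_list)

definition diag_index_set :: "nat list \<Rightarrow> nat \<Rightarrow> nat set" where
  "diag_index_set xs k = {i. 1 \<le> i \<and> i \<le> k \<and> part xs i + i - 1 \<ge> k}"

lemma diag_index_set_subset: "diag_index_set xs k \<subseteq> {1..k}"
  by (auto simp: diag_index_set_def)

lemma finite_diag_index_set [simp]: "finite (diag_index_set xs k)"
  using diag_index_set_subset finite_subset by blast

lemma diag_entry_eq_card: "diag_entry xs k = card (diag_index_set xs k)"
  by (simp add: diag_entry_def diag_index_set_def)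

lemma diag_entry_le_first_part:
  assumes "sorted_wrt (\<ge>) xs"
  shows "diag_entry xs k \<le> part xs 1"
proof -
  have "diag_index_set xs k \<subseteq> {k + 1 - part xs 1..k}"
  proof
    fix i assume "i \<in> diag_index_set xs k"
    moreover from this have "part xs i \<le> part xs 1"
      using part_antimono[OF assms, of 1 i] by (simp add: diag_index_set_def)
    ultimately show "i \<in> {k + 1 - part xs 1..k}"
      by (simp add: diag_index_set_def; linarith)
  qed
  then have "card (diag_index_set xs k) \<le> card {k + 1 - part xs 1..k}"
    by (intro card_mono) auto
  then show ?thesis by (simp add: diag_entry_eq_card)
qed

lemma diag_entry_first_part_pos:
  assumes "0 < part xs 1"
  shows "0 < diag_entry xs (part xs 1)"
proof -
  have "1 \<in> diag_index_set xs (part xs 1)"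
    using assms by (simp add: diag_index_set_def)
  then show ?thesis by (auto simp: diag_entry_eq_card card_gt_0_iff)
qed

lemma diag_entry_beyond_size:
  assumes "sum_list xs + length xs \<le> k"
  shows "diag_entry xs k = 0"
proof -
  have "part xs i + i - 1 < k" if "1 \<le> i" "i \<le> k" for i
    using part_le_sum_list[of xs i] that assms by (cases "i \<le> length xs") (auto simp: part_def)
  then have "diag_index_set xs k = {}"
    by (force simp: diag_index_set_def)
  then show ?thesis by (simp add: diag_entry_eq_card)
qed

lemma diag_index_set_Suc_subset:
  assumes "sorted_wrt (\<ge>) xs" "part xs 1 \<le> k"
  shows "diag_index_set xs (Suc k) \<subseteq> Suc ` diag_index_set xs k"
proof
  fix i assume i: "i \<in> diag_index_set xs (Suc k)"
  then have "2 \<le> i"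
    using assms(2) by (cases "i = 1") (auto simp: diag_index_set_def)
  moreover have "part xs i \<le> part xs (i - 1)"
    using part_antimono[OF assms(1), of "i - 1" i] calculation by simp
  ultimately have "i - 1 \<in> diag_index_set xs k"
    using i by (auto simp: diag_index_set_def)
  then show "i \<in> Suc ` diag_index_set xs k"
    using \<open>2 \<le> i\<close> by (intro image_eqI[of _ _ "i - 1"]) auto
qed

(* If the shift were onto, then from 1 in S k (k being the largest part) each j in S k
   would give j + 1 in S (k + 1) and hence j + 1 in S k, so S k = {1..k}. *)
lemma diag_entry_Suc_first_part_less:
  assumes "sorted_wrt (\<ge>) xs" "k = part xs 1" "0 < k" "diag_entry xs k \<noteq> k"
  shows "diag_entry xs (Suc k) < diag_entry xs k"
proof -
  let ?S = "diag_index_set xs"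
  have sub: "?S (Suc k) \<subseteq> Suc ` ?S k"
    using diag_index_set_Suc_subset assms(1,2) by simp
  have "?S (Suc k) \<noteq> Suc ` ?S k"
  proof
    assume shift: "?S (Suc k) = Suc ` ?S k"
    have "j \<le> k \<longrightarrow> j \<in> ?S k" if "1 \<le> j" for j
      using that
    proof (induction j rule: nat_induct_at_least)
      case base
      then show ?case using assms(2,3) by (simp add: diag_index_set_def)
    next
      case (Suc j)
      show ?case
      proof
        assume "Suc j \<le> k"
        with Suc have "Suc j \<in> ?S (Suc k)"
          using shift by simp
        with \<open>Suc j \<le> k\<close> show "Suc j \<in> ?S k"
          by (simp add: diag_index_set_def)
      qed
    qed
    then have "?S k = {1..k}"
      using diag_index_set_subset by auto
    then show False
      using assms(4) by (simp add: diag_entry_eq_card)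
  qed
  then have "card (?S (Suc k)) < card (Suc ` ?S k)"
    using sub by (intro psubset_card_mono) auto
  then show ?thesis
    by (simp add: diag_entry_eq_card card_image)
qed

lemma nth_strip_trailing_zeros:
  fixes ys :: "'a::zero list"
  defines "zs \<equiv> rev (dropWhile (\<lambda>x. x = 0) (rev ys))"
  assumes "i < length ys"
  shows "ys ! i = (if i < length zs then zs ! i else 0)"
proof -
  define ws where "ws = rev (takeWhile (\<lambda>x. x = 0) (rev ys))"
  have "ys = zs @ ws"
    unfolding zs_def ws_def by (metis rev_append rev_rev_ident takeWhile_dropWhile_id)
  moreover have "\<forall>w\<in>set ws. w = 0"
    unfolding ws_def by (auto dest: set_takeWhileD)
  ultimately show ?thesis
    using assms(2) by (auto simp: nth_append)
qed

lemma diag_entry_conv_diag_seq: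
  assumes "0 < k"
  shows "diag_entry xs k = (if k \<le> length (diag_seq xs) then diag_seq xs ! (k - 1) else 0)"
proof -
  define N where "N = sum_list xs + length xs"
  define ys where "ys = map (diag_entry xs) [1..<N + 1]"
  have ds: "diag_seq xs = rev (dropWhile (\<lambda>x. x = 0) (rev ys))"
    by (simp add: diag_seq_def ys_def N_def)
  show ?thesis
  proof (cases "k \<le> N")
    case True
    then have "k - 1 < length ys" "ys ! (k - 1) = diag_entry xs k"
      using assms by (simp_all add: ys_def del: upt_Suc)
    then show ?thesis
      using nth_strip_trailing_zeros[of "k - 1" ys] assms unfolding ds[symmetric] by auto
  next
    case False
    have "length (diag_seq xs) \<le> length ys"
      unfolding ds using length_dropWhile_le[of _ "rev ys"] by simp
    also have "length ys = N"
      by (simp add: ys_def del: upt_Suc)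
    finally show ?thesis
      using False diag_entry_beyond_size[of xs k] by (simp add: N_def)
  qed
qed

lemma diag_seq_run_ends_at_first_part:
  assumes "sorted_wrt (\<ge>) xs" "0 < part xs 1" "diag_entry xs (part xs 1) < part xs 1"
  shows "part xs 1 \<le> length (diag_seq xs)"
    and "part xs 1 < length (diag_seq xs) \<Longrightarrow>
           diag_seq xs ! part xs 1 \<noteq> diag_seq xs ! (part xs 1 - 1)"
proof -
  let ?k = "part xs 1"
  show len: "?k \<le> length (diag_seq xs)"
    using diag_entry_first_part_pos[OF assms(2)] diag_entry_conv_diag_seq[OF assms(2)]
    by (auto split: if_splits)
  have "diag_entry xs (Suc ?k) < diag_entry xs ?k"
    using diag_entry_Suc_first_part_less[OF assms(1) refl assms(2)] assms(3) by simp
  moreover assume "?k < length (diag_seq xs)"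
  ultimately show "diag_seq xs ! ?k \<noteq> diag_seq xs ! (?k - 1)"
    using len diag_entry_conv_diag_seq[of ?k xs] diag_entry_conv_diag_seq[of "Suc ?k" xs] assms(2)
    by simp
qed

definition descending_runs :: "(nat \<Rightarrow> nat) \<Rightarrow> nat \<Rightarrow> nat list" where
  "descending_runs s m = concat (map (\<lambda>j. replicate (s j) j) (rev [1..<m+1]))"

lemma descending_runs_0 [simp]: "descending_runs s 0 = []"
  by (simp add: descending_runs_def)

lemma descending_runs_Suc:
  "descending_runs s (Suc m) = replicate (s (Suc m)) (Suc m) @ descending_runs s m"
  by (simp add: descending_runs_def)

lemma set_descending_runs_le: "x \<in> set (descending_runs s m) \<Longrightarrow> x \<le> m"
  by (induction m) (auto simp: descending_runs_Suc)

lemma descending_runs_run_end: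
  assumes "i < length (descending_runs s m)"
    and "Suc i < length (descending_runs s m) \<Longrightarrow>
           descending_runs s m ! Suc i \<noteq> descending_runs s m ! i"
  shows "\<exists>j. 1 \<le> j \<and> j \<le> m \<and> Suc i = (\<Sum>l=j..m. s l)"
  using assms
proof (induction m arbitrary: i)
  case 0
  then show ?case by simp
next
  case (Suc m)
  show ?case
  proof (cases "i < s (Suc m)")
    case True
    then have "Suc i = s (Suc m)"
      using Suc.prems by (cases "Suc i < s (Suc m)") (auto simp: descending_runs_Suc nth_append)
    then show ?thesis by (intro exI[of _ "Suc m"]) simp
  next
    case False
    define i' where "i' = i - s (Suc m)"
    have i: "i = s (Suc m) + i'" using False i'_def by simp
    obtain j where j: "1 \<le> j" "j \<le> m" "Suc i' = (\<Sum>l=j..m. s l)"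
      using Suc.IH[of i'] Suc.prems by (auto simp: descending_runs_Suc i nth_append)
    then have "Suc i = (\<Sum>l=j..Suc m. s l)"
      by (simp add: sum.cl_ivl_Suc i)
    then show ?thesis using j by (intro exI[of _ j]) simp
  qed
qed

lemma first_part_ends_descending_run:
  fixes ps :: "nat list" and s :: "nat \<Rightarrow> nat"
  assumes "sorted_wrt (\<ge>) xs" and diag: "diag_seq xs = ps @ descending_runs s (length ps)"
    and "\<forall>x\<in>set ps. x \<le> length ps" and "length ps < part xs 1"
  shows "\<exists>j. 1 \<le> j \<and> j \<le> length ps \<and> part xs 1 = length ps + (\<Sum>l=j..length ps. s l)"
proof -
  let ?k = "part xs 1"
  have "0 < ?k"
    using assms(4) by simp
  have "x \<le> length ps" if "x \<in> set (diag_seq xs)" for x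
    using that assms(3) set_descending_runs_le by (auto simp: diag)
  then have "diag_entry xs ?k \<le> length ps"
    using diag_entry_conv_diag_seq[OF \<open>0 < ?k\<close>, of xs] \<open>0 < ?k\<close> by auto
  then have "diag_entry xs ?k < ?k"
    using assms(4) by simp
  note run_end = diag_seq_run_ends_at_first_part[OF assms(1) \<open>0 < ?k\<close> this]
  define i where "i = ?k - Suc (length ps)"
  have k: "?k = length ps + Suc i"
    using assms(4) by (simp add: i_def)
  have "\<exists>j. 1 \<le> j \<and> j \<le> length ps \<and> Suc i = (\<Sum>l=j..length ps. s l)"
    using run_end unfolding k diag
    by (intro descending_runs_run_end) (simp_all add: nth_append)
  then show ?thesis
    using k by simp
qed

theorem proposition2p8:
  fixes n q :: nat and s :: "nat \<Rightarrow> nat" and \<alpha> :: "nat list"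
  assumes "0 < n" and "\<alpha> \<in> partitions n" and "1 \<le> q"
    and "diag_seq \<alpha> = [1..<q+1] @ concat (map (\<lambda>j. replicate (s j) j) (rev [1..<q+1]))"
  shows "part \<alpha> 1 \<in> {q + (\<Sum>i\<in>{j..q}. s i) | j. 1 \<le> j \<and> j \<le> q + 1}"
proof -
  have diag: "diag_seq \<alpha> = [1..<q+1] @ descending_runs s (length [1..<q+1])"
    using assms(4) by (simp add: descending_runs_def del: upt_Suc)
  have sorted: "sorted_wrt (\<ge>) \<alpha>"
    using assms(2) by (simp add: partitions_def)
  have "diag_entry \<alpha> q = q"
    using diag_entry_conv_diag_seq[of q \<alpha>] assms(3) by (simp add: diag nth_append)
  then have "q \<le> part \<alpha> 1"
    using diag_entry_le_first_part[OF sorted] by metis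
  then consider "part \<alpha> 1 = q" | "q < part \<alpha> 1"
    by linarith
  then show ?thesis
  proof cases
    case 1
    then show ?thesis by (intro CollectI exI[of _ "q + 1"]) simp
  next
    case 2
    then obtain j where "1 \<le> j" "j \<le> q" "part \<alpha> 1 = q + (\<Sum>l=j..q. s l)"
      using first_part_ends_descending_run[OF sorted diag] by (auto simp del: upt_Suc)
    then show ?thesis by auto
  qed
qed

end
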